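(* Let $T>0$ and consider the one-dimensional Gaussian process $X=(\langle f_t,\cdot\rangle)_{0\le t\le T}$ on the white noise space, with $f_t\in L^2(\mathbb R,dx)$, $0\le t\le T$. Write $f(t,s):=f_t-f_s$ for $0\le s,t\le T$ and assume that $0<\|f(t,s)\|\le M$ for $dt\,ds$-a.e. $(t,s)\in[0,T]^2$, for some $M<\infty$. Then the self-intersection local time $\int_0^T\int_0^t\delta(X_t-X_s)\,ds\,dt$ of $X$ is an element of $\mathcal D^{1,2}$ if \[ \int_0^T\!\int_0^{t_1}\!\int_0^T\!\int_0^{t_2}\Big(\|f(t_1,s_1)\|^2\|f(t_2,s_2)\|^2-\langle f(t_1,s_1),f(t_2,s_2)\rangle^2\Big)^{-\frac32}ds_2\,dt_2\,ds_1\,dt_1<\infty . \]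
   Context: The white noise space is $(\mathcal S',\mu)$, $\mu$ the Gaussian measure on the tempered distributions with $\int e^{i\langle\xi,x\rangle}d\mu=e^{-\|\xi\|^2/2}$, $\|\cdot\|$ and $\langle\cdot,\cdot\rangle$ the norm and inner product (dual pairing) of $L^2(\mathbb R,dx)$. Generalized functions are chaos series $\Phi=\sum_n\langle\Phi^{(n)},:\cdot^{\otimes n}:\rangle$ (Wick-ordered monomials / multiple Wiener integrals) with $S$-transform $S\Phi(\xi)=\sum_n\langle\Phi^{(n)},\xi^{\otimes n}\rangle$, $\xi\in\mathcal S_{\mathbb C}$; a Hida distribution is determined by its $S$-transform. For $0\ne g\in L^2(\mathbb R)$, Donsker's delta $\delta(\langle g,\cdot\rangle)$ is the Hida distribution with $S\delta(\langle g,\cdot\rangle)(\xi)=\frac{1}{\sqrt{2\pi}\|g\|}\exp\big(-\frac{\langle\xi,g\rangle^2}{2\|g\|^2}\big)$, and $\delta(X_t-X_s):=\delta(\langle f(t,s),\cdot\rangle)$. The self-intersection local time $\int_0^T\int_0^t\delta(X_t-X_s)\,ds\,dt$ is defined as a Bochner integral in a suitable Hilbert space of Hida distributions; its $S$-transform is $\xi\mapsto\int_0^T\int_0^tS\delta(\langle f(t,s),\cdot\rangle)(\xi)\,ds\,dt$. For $\alpha\in\mathbb R$, $\mathcal D^{\alpha,2}$ consists of chaos series with square-integrable symmetric kernels $\Phi^{(n)}$ and $\sum_n(1+n^\alpha)\,n!\,\|\Phi^{(n)}\|^2<\infty$; $\mathcal D^{1,2}$ is the usual space of once Malliavin differentiable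 square-integrable random variables. *)

theory Defs
  imports "HOL-Probability.Probability" "HOL-Combinatorics.Permutations"
begin

definition L2 :: "(real \<Rightarrow> real) \<Rightarrow> bool" where
  "L2 g \<longleftrightarrow> g \<in> borel_measurable lborel \<and> integrable lborel (\<lambda>x. (g x)\<^sup>2)"

definition l2inner :: "(real \<Rightarrow> real) \<Rightarrow> (real \<Rightarrow> real) \<Rightarrow> real" where
  "l2inner g h = (\<integral>x. g x * h x \<partial>lborel)"

definition l2norm :: "(real \<Rightarrow> real) \<Rightarrow> real" where
  "l2norm g = sqrt (\<integral>x. (g x)\<^sup>2 \<partial>lborel)"

definition cpair :: "(real \<Rightarrow> complex) \<Rightarrow> (real \<Rightarrow> real) \<Rightarrow> complex" where
  "cpair \<xi> g = (\<integral>x. \<xi> x * complex_of_real (g x) \<partial>lborel)"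

definition schwartzC :: "(real \<Rightarrow> complex) \<Rightarrow> bool" where
  "schwartzC \<xi> \<longleftrightarrow> (\<exists>D :: nat \<Rightarrow> real \<Rightarrow> complex. D 0 = \<xi> \<and>
     (\<forall>m x. (D m has_vector_derivative D (Suc m) x) (at x)) \<and>
     (\<forall>k m. \<exists>C. \<forall>x. \<bar>x\<bar> ^ k * norm (D m x) \<le> C))"

abbreviation Rn :: "nat \<Rightarrow> (nat \<Rightarrow> real) measure" where
  "Rn n \<equiv> Pi\<^sub>M {..<n} (\<lambda>_. lborel)"

definition sym_L2_kernel :: "nat \<Rightarrow> ((nat \<Rightarrow> real) \<Rightarrow> real) \<Rightarrow> bool" where
  "sym_L2_kernel n \<Phi> \<longleftrightarrow> \<Phi> \<in> borel_measurable (Rn n) \<and>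
     integrable (Rn n) (\<lambda>x. (\<Phi> x)\<^sup>2) \<and>
     (\<forall>\<pi>. \<pi> permutes {..<n} \<longrightarrow> (\<forall>x\<in>space (Rn n). \<Phi> (x \<circ> \<pi>) = \<Phi> x))"

definition knorm2 :: "nat \<Rightarrow> ((nat \<Rightarrow> real) \<Rightarrow> real) \<Rightarrow> real" where
  "knorm2 n \<Phi> = (\<integral>x. (\<Phi> x)\<^sup>2 \<partial>Rn n)"

definition tensor_pair :: "nat \<Rightarrow> ((nat \<Rightarrow> real) \<Rightarrow> real) \<Rightarrow> (real \<Rightarrow> complex) \<Rightarrow> complex" where
  "tensor_pair n \<Phi> \<xi> = (\<integral>x. complex_of_real (\<Phi> x) * (\<Prod>i<n. \<xi> (x i)) \<partial>Rn n)"

text \<open>A Hida distribution is identified with its S-transform (it is determined by it).\<close>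
definition in_D :: "real \<Rightarrow> ((real \<Rightarrow> complex) \<Rightarrow> complex) \<Rightarrow> bool" where
  "in_D \<alpha> F \<longleftrightarrow> (\<exists>\<Phi> :: nat \<Rightarrow> (nat \<Rightarrow> real) \<Rightarrow> real.
     (\<forall>n. sym_L2_kernel n (\<Phi> n)) \<and>
     summable (\<lambda>n. (1 + real n powr \<alpha>) * fact n * knorm2 n (\<Phi> n)) \<and>
     (\<forall>\<xi>. schwartzC \<xi> \<longrightarrow> (\<lambda>n. tensor_pair n (\<Phi> n) \<xi>) sums F \<xi>))"

definition S_donsker :: "(real \<Rightarrow> real) \<Rightarrow> (real \<Rightarrow> complex) \<Rightarrow> complex" where
  "S_donsker g \<xi> = complex_of_real (1 / (sqrt (2 * pi) * l2norm g)) *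
      exp (- (cpair \<xi> g)\<^sup>2 / complex_of_real (2 * (l2norm g)\<^sup>2))"

definition fdiff :: "(real \<Rightarrow> real \<Rightarrow> real) \<Rightarrow> real \<Rightarrow> real \<Rightarrow> real \<Rightarrow> real" where
  "fdiff f t s = (\<lambda>x. f t x - f s x)"

definition simplex2 :: "real \<Rightarrow> (real \<times> real) set" where
  "simplex2 T = {(t, s). 0 \<le> s \<and> s \<le> t \<and> t \<le> T}"

definition sil_integrand :: "(real \<Rightarrow> real \<Rightarrow> real) \<Rightarrow> (real \<Rightarrow> complex) \<Rightarrow> real \<times> real \<Rightarrow> complex" where
  "sil_integrand f \<xi> = (\<lambda>(t, s). S_donsker (fdiff f t s) \<xi>)"

text \<open>S-transform of int_0^T int_0^t delta(X_t - X_s) ds dt.\<close>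
definition S_SIL :: "real \<Rightarrow> (real \<Rightarrow> real \<Rightarrow> real) \<Rightarrow> (real \<Rightarrow> complex) \<Rightarrow> complex" where
  "S_SIL T f \<xi> = set_lebesgue_integral (lborel \<Otimes>\<^sub>M lborel) (simplex2 T) (sil_integrand f \<xi>)"

definition gram_integrand :: "(real \<Rightarrow> real \<Rightarrow> real) \<Rightarrow> (real \<times> real) \<times> (real \<times> real) \<Rightarrow> ennreal" where
  "gram_integrand f = (\<lambda>((t1, s1), (t2, s2)).
     let a = fdiff f t1 s1; b = fdiff f t2 s2;
         G = (l2norm a)\<^sup>2 * (l2norm b)\<^sup>2 - (l2inner a b)\<^sup>2
     in if G > 0 then ennreal (G powr (-3/2)) else \<infinity>)"

end

theory Submission
  imports Defs
begin

(* Donsker's delta of a centred Gaussian variable <g,.> has the chaos expansion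
     delta(<g,.>) = sum_n c_n ||g||^-(n+1) <g^(tensor n), :.^(tensor n):>,
   with c_n the Taylor coefficients of exp (-z^2/2) / sqrt (2 pi); this is read off from its
   S-transform. Integrating over 0 <= s <= t <= T gives the kernels Phi^(n) of the self-intersection
   local time, and Fubini plus dominated convergence identify the S-transform of the local time with
   the sum of the S-transforms of its chaos terms. Domination needs ||f(t,s)||^-1 to be integrable,
   which follows from the hypothesis because the Gram determinant G is at most
   ||f(t1,s1)||^2 ||f(t2,s2)||^2.
   For the D^(1,2) norm, (1 + n) n! ||Phi^(n)||^2 is the double integral of
   (1 + n) n! c_n^2 <f1,f2>^n / (||f1|| ||f2||)^(n+1), and the binomial series
   sum_m (3/2)_m / m! y^m = (1 - y)^(-3/2) sums these integrands to
   ||f1||^2 ||f2||^2 G^(-3/2) / (2 pi) <= M^4 G^(-3/2) / (2 pi). *)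

lemma l2norm_nonneg: "l2norm g \<ge> 0"
  by (simp add: l2norm_def integral_nonneg_AE)

lemma l2norm_power2: "(l2norm g)\<^sup>2 = (\<integral>x. (g x)\<^sup>2 \<partial>lborel)"
  by (simp add: l2norm_def integral_nonneg_AE)

lemma L2_integrable_mult:
  assumes "L2 g" "L2 h"
  shows "integrable lborel (\<lambda>x. g x * h x)"
proof (rule Bochner_Integration.integrable_bound)
  show "integrable lborel (\<lambda>x. (g x)\<^sup>2 + (h x)\<^sup>2)"
    using assms by (auto simp: L2_def)
  show "(\<lambda>x. g x * h x) \<in> borel_measurable lborel"
    using assms by (auto simp: L2_def)
  show "AE x in lborel. norm (g x * h x) \<le> norm ((g x)\<^sup>2 + (h x)\<^sup>2)"
  proof (intro AE_I2)
    fix x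
    have "2 * (\<bar>g x\<bar> * \<bar>h x\<bar>) \<le> (g x)\<^sup>2 + (h x)\<^sup>2"
      using sum_squares_bound[of "\<bar>g x\<bar>" "\<bar>h x\<bar>"] by simp
    then have "\<bar>g x\<bar> * \<bar>h x\<bar> \<le> (g x)\<^sup>2 + (h x)\<^sup>2"
      using mult_nonneg_nonneg[OF abs_ge_zero abs_ge_zero, of "g x" "h x"] by linarith
    then show "norm (g x * h x) \<le> norm ((g x)\<^sup>2 + (h x)\<^sup>2)"
      by (simp add: abs_mult)
  qed
qed

lemma L2_diff:
  assumes "L2 g" "L2 h"
  shows "L2 (\<lambda>x. g x - h x)"
proof -
  have "integrable lborel (\<lambda>x. (g x)\<^sup>2 + (h x)\<^sup>2 - 2 * (g x * h x))"
    using assms L2_integrable_mult[OF assms] by (auto simp: L2_def)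
  then show ?thesis
    using assms by (auto simp: L2_def power2_diff algebra_simps intro: borel_measurable_diff)
qed

lemma L2_integral_abs_mult_le:
  assumes "L2 g" "L2 h"
  shows "(\<integral>x. \<bar>g x * h x\<bar> \<partial>lborel) \<le> l2norm g * l2norm h"
proof -
  have [measurable]: "g \<in> borel_measurable lborel" "h \<in> borel_measurable lborel"
    using assms by (auto simp: L2_def)
  have sq: "(\<integral>\<^sup>+x. ennreal \<bar>u x\<bar> ^ 2 \<partial>lborel) = ennreal ((l2norm u)\<^sup>2)" if "L2 u" for u
    using that by (simp add: L2_def l2norm_power2 ennreal_power nn_integral_eq_integral)
  have "ennreal ((\<integral>x. \<bar>g x * h x\<bar> \<partial>lborel)\<^sup>2) = (\<integral>\<^sup>+x. ennreal \<bar>g x\<bar> * ennreal \<bar>h x\<bar> \<partial>lborel)\<^sup>2"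
    using integrable_abs[OF L2_integrable_mult[OF assms]]
    by (simp add: nn_integral_eq_integral ennreal_power ennreal_mult[symmetric] abs_mult)
  also have "\<dots> \<le> (\<integral>\<^sup>+x. ennreal \<bar>g x\<bar> ^ 2 \<partial>lborel) * (\<integral>\<^sup>+x. ennreal \<bar>h x\<bar> ^ 2 \<partial>lborel)"
    by (rule Cauchy_Schwarz_nn_integral) auto
  also have "\<dots> = ennreal ((l2norm g * l2norm h)\<^sup>2)"
    using assms by (simp add: sq ennreal_mult[symmetric] power_mult_distrib)
  finally show ?thesis
    by (auto simp: l2norm_nonneg intro: power2_le_imp_le)
qed

lemma integrable_L2_mult_complex:
  fixes \<xi> :: "real \<Rightarrow> complex"
  assumes "L2 g" "\<xi> \<in> borel_measurable lborel" "L2 (\<lambda>y. norm (\<xi> y))"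
  shows "integrable lborel (\<lambda>y. of_real (g y) * \<xi> y)"
proof (rule Bochner_Integration.integrable_bound)
  show "integrable lborel (\<lambda>y. \<bar>g y * norm (\<xi> y)\<bar>)"
    using integrable_abs[OF L2_integrable_mult[OF assms(1,3)]] .
  show "(\<lambda>y. of_real (g y) * \<xi> y) \<in> borel_measurable lborel"
    using assms by (auto simp: L2_def)
qed (simp add: norm_mult abs_mult)

lemma norm_cpair_le:
  assumes "L2 g" "L2 (\<lambda>y. norm (\<xi> y))"
  shows "norm (cpair \<xi> g) \<le> l2norm g * l2norm (\<lambda>y. norm (\<xi> y))"
proof -
  have "norm (cpair \<xi> g) \<le> (\<integral>y. norm (\<xi> y * of_real (g y)) \<partial>lborel)"
    unfolding cpair_def by (rule integral_norm_bound)
  also have "\<dots> = (\<integral>y. \<bar>g y * norm (\<xi> y)\<bar> \<partial>lborel)"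
    by (simp add: norm_mult abs_mult mult.commute)
  also have "\<dots> \<le> l2norm g * l2norm (\<lambda>y. norm (\<xi> y))"
    by (rule L2_integral_abs_mult_le[OF assms])
  finally show ?thesis .
qed

lemma schwartzC_borel_measurable:
  assumes "schwartzC \<xi>"
  shows "\<xi> \<in> borel_measurable lborel"
proof -
  from assms obtain D :: "nat \<Rightarrow> real \<Rightarrow> complex"
    where "D 0 = \<xi>" "\<forall>m x. (D m has_vector_derivative D (Suc m) x) (at x)"
    unfolding schwartzC_def by blast
  then have "isCont \<xi> x" for x
    using has_vector_derivative_continuous by metis
  then show ?thesis
    by (auto intro: borel_measurable_continuous_onI continuous_at_imp_continuous_on)
qed

lemma schwartzC_L2_norm:
  assumes "schwartzC \<xi>"
  shows "L2 (\<lambda>x. norm (\<xi> x))"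
proof -
  from assms obtain D :: "nat \<Rightarrow> real \<Rightarrow> complex"
    where D: "D 0 = \<xi>" "\<forall>k m. \<exists>C. \<forall>x. \<bar>x\<bar> ^ k * norm (D m x) \<le> C"
    unfolding schwartzC_def by blast
  obtain C0 where C0: "\<And>x. norm (\<xi> x) \<le> C0"
    using D(2)[rule_format, of 0 0] D(1) by auto
  obtain C2 where C2: "\<And>x. x\<^sup>2 * norm (\<xi> x) \<le> C2"
    using D(2)[rule_format, of 2 0] D(1) by auto
  have "C0 \<ge> 0"
    using C0[of 0] norm_ge_zero order_trans by blast
  have [measurable]: "\<xi> \<in> borel_measurable borel"
    using schwartzC_borel_measurable[OF assms] by simp
  have bound: "(norm (\<xi> x))\<^sup>2 \<le> C0 * (C0 + C2) * inverse (1 + x\<^sup>2)" for x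
  proof -
    have "norm (\<xi> x) \<le> (C0 + C2) * inverse (1 + x\<^sup>2)"
      using C0[of x] C2[of x] by (simp add: field_simps add_pos_nonneg)
    then have "norm (\<xi> x) * norm (\<xi> x) \<le> C0 * ((C0 + C2) * inverse (1 + x\<^sup>2))"
      using C0[of x] \<open>C0 \<ge> 0\<close> by (intro mult_mono) auto
    then show ?thesis
      by (simp add: power2_eq_square mult_ac)
  qed
  have "integrable lborel (\<lambda>x. inverse (1 + x\<^sup>2) :: real)"
    using integrable_inverse_1_plus_square by (simp add: set_integrable_def)
  then have "integrable lborel (\<lambda>x. (norm (\<xi> x))\<^sup>2)"
  proof (rule Bochner_Integration.integrable_bound[OF integrable_mult_right])
    show "(\<lambda>x. (norm (\<xi> x))\<^sup>2) \<in> borel_measurable lborel"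
      by measurable
    show "AE x in lborel. norm ((norm (\<xi> x))\<^sup>2) \<le> norm (C0 * (C0 + C2) * inverse (1 + x\<^sup>2))"
      using bound by (intro AE_I2) (auto intro: order_trans[OF _ abs_ge_self])
  qed
  then show ?thesis
    by (simp add: L2_def)
qed

lemma sigma_finite_Rn: "sigma_finite_measure (Rn n)"
proof -
  interpret product_sigma_finite "\<lambda>_::nat. lborel :: real measure" by standard
  interpret finite_product_sigma_finite "\<lambda>_::nat. lborel :: real measure" "{..<n}" by standard simp
  show ?thesis by (rule sigma_finite_measure_axioms)
qed

lemma measurable_Rn_coordinate: "i \<in> {..<n} \<Longrightarrow> (\<lambda>x. x i) \<in> borel_measurable (Rn n)"
  using measurable_component_singleton[of i "{..<n}" "\<lambda>_. lborel"] by (simp add: measurable_lborel2)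

lemma integral_Rn_prod:
  fixes g :: "real \<Rightarrow> 'b::{real_normed_field,banach,second_countable_topology}"
  assumes "integrable lborel g"
  shows "(\<integral>x. (\<Prod>i<n. g (x i)) \<partial>Rn n) = (integral\<^sup>L lborel g) ^ n"
proof -
  interpret product_sigma_finite "\<lambda>_::nat. lborel :: real measure" by standard
  show ?thesis using product_integral_prod[of "{..<n}" "\<lambda>_. g"] assms by simp
qed

lemma nn_integral_Rn_prod:
  assumes "g \<in> borel_measurable lborel"
  shows "(\<integral>\<^sup>+x. (\<Prod>i<n. g (x i)) \<partial>Rn n) = (integral\<^sup>N lborel g) ^ n"
proof -
  interpret product_sigma_finite "\<lambda>_::nat. lborel :: real measure" by standard
  show ?thesis using product_nn_integral_prod[of "{..<n}" "\<lambda>_. g"] assms by simp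
qed

lemma nn_integral_Rn_prod_abs_le:
  assumes "integrable lborel u" "(\<integral>y. \<bar>u y\<bar> \<partial>lborel) \<le> B" "c \<ge> 0"
  shows "(\<integral>\<^sup>+x. ennreal (c * (\<Prod>i<n. \<bar>u (x i)\<bar>)) \<partial>Rn n) \<le> ennreal (c * B ^ n)"
proof -
  have [measurable]: "u \<in> borel_measurable lborel"
    using assms(1) by (rule borel_measurable_integrable)
  have "(\<integral>\<^sup>+x. ennreal (c * (\<Prod>i<n. \<bar>u (x i)\<bar>)) \<partial>Rn n)
      = ennreal c * (\<integral>\<^sup>+x. (\<Prod>i<n. ennreal \<bar>u (x i)\<bar>) \<partial>Rn n)"
    using assms(3) measurable_Rn_coordinate[measurable]
    by (subst nn_integral_cmult[symmetric]) (auto simp: ennreal_mult prod_nonneg prod_ennreal)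
  also have "\<dots> = ennreal c * (\<integral>\<^sup>+y. ennreal \<bar>u y\<bar> \<partial>lborel) ^ n"
    by (subst nn_integral_Rn_prod) auto
  also have "(\<integral>\<^sup>+y. ennreal \<bar>u y\<bar> \<partial>lborel) = ennreal (\<integral>y. \<bar>u y\<bar> \<partial>lborel)"
    using assms(1) by (intro nn_integral_eq_integral) auto
  also have "ennreal c * ennreal (\<integral>y. \<bar>u y\<bar> \<partial>lborel) ^ n = ennreal (c * (\<integral>y. \<bar>u y\<bar> \<partial>lborel) ^ n)"
    using assms(3) by (simp add: ennreal_mult ennreal_power)
  also have "\<dots> \<le> ennreal (c * B ^ n)"
    using assms(2,3) by (intro ennreal_leI mult_left_mono power_mono) auto
  finally show ?thesis .
qed

lemma AE_pair_fst_snd: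
  assumes "sigma_finite_measure M" "{x \<in> space M. P x} \<in> sets M" "AE x in M. P x"
  shows "AE w in M \<Otimes>\<^sub>M M. P (fst w) \<and> P (snd w)"
proof -
  interpret pair_sigma_finite M M
    using assms(1) by (intro pair_sigma_finite.intro)
  show ?thesis
  proof (rule AE_pair_measure)
    have "{w \<in> space (M \<Otimes>\<^sub>M M). P (fst w) \<and> P (snd w)}
        = ({x \<in> space M. P x} \<times> space M) \<inter> (space M \<times> {x \<in> space M. P x})"
      by (auto simp: space_pair_measure)
    then show "{w \<in> space (M \<Otimes>\<^sub>M M). P (fst w) \<and> P (snd w)} \<in> sets (M \<Otimes>\<^sub>M M)"
      using assms(2) by auto
    show "AE x in M. AE y in M. P (fst (x, y)) \<and> P (snd (x, y))"
      using assms(3) by eventually_elim (use assms(3) in \<open>auto elim: eventually_mono\<close>)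
  qed
qed

lemma nn_integral_fst_mult_snd:
  fixes g :: "'a \<Rightarrow> ennreal" and h :: "'b \<Rightarrow> ennreal"
  assumes "sigma_finite_measure N"
    and [measurable]: "g \<in> borel_measurable M" "h \<in> borel_measurable N"
  shows "(\<integral>\<^sup>+z. g (fst z) * h (snd z) \<partial>(M \<Otimes>\<^sub>M N)) = (\<integral>\<^sup>+x. g x \<partial>M) * (\<integral>\<^sup>+y. h y \<partial>N)"
proof -
  interpret sigma_finite_measure N by fact
  have "(\<integral>\<^sup>+z. g (fst z) * h (snd z) \<partial>(M \<Otimes>\<^sub>M N)) = (\<integral>\<^sup>+x. \<integral>\<^sup>+y. g x * h y \<partial>N \<partial>M)"
    by (subst nn_integral_fst[symmetric]) auto
  also have "\<dots> = (\<integral>\<^sup>+x. g x \<partial>M) * (\<integral>\<^sup>+y. h y \<partial>N)"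
    by (simp add: nn_integral_cmult nn_integral_multc)
  finally show ?thesis .
qed

lemma integral_power2_eq_integral_pair:
  fixes g :: "'a \<Rightarrow> real"
  assumes "sigma_finite_measure M" "integrable (M \<Otimes>\<^sub>M M) (\<lambda>w. g (fst w) * g (snd w))"
  shows "(\<integral>p. g p \<partial>M)\<^sup>2 = (\<integral>w. g (fst w) * g (snd w) \<partial>(M \<Otimes>\<^sub>M M))"
proof -
  interpret pair_sigma_finite M M
    using assms(1) by (intro pair_sigma_finite.intro)
  have "(\<integral>w. g (fst w) * g (snd w) \<partial>(M \<Otimes>\<^sub>M M)) = (\<integral>p. \<integral>q. g p * g q \<partial>M \<partial>M)"
    using integral_fst[of "\<lambda>p q. g p * g q"] assms(2) by (simp add: case_prod_beta')
  also have "\<dots> = (\<integral>p. g p \<partial>M) * (\<integral>q. g q \<partial>M)"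
    by simp
  finally show ?thesis
    by (simp add: power2_eq_square)
qed

lemma inverse_power_Suc_mult_power:
  fixes a b :: real
  assumes "a \<ge> 0"
  shows "inverse a ^ Suc n * (a * b) ^ n = inverse a * b ^ n"
  using assms by (cases "a = 0") (simp_all add: power_mult_distrib power_inverse field_simps)

lemma inverse_power_Suc_mult_power2:
  fixes a b :: real
  assumes "a \<ge> 0" "b \<ge> 0"
  shows "inverse a ^ Suc n * inverse b ^ Suc n * (a * b) ^ n = inverse a * inverse b"
  using assms by (cases "a = 0 \<or> b = 0") (auto simp: power_mult_distrib power_inverse field_simps)

(* donsker_coef n times this is the n-th chaos kernel of Donsker's delta of <g,.> *)
definition ntensor :: "nat \<Rightarrow> (real \<Rightarrow> real) \<Rightarrow> (nat \<Rightarrow> real) \<Rightarrow> real" where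
  "ntensor n g x = inverse (l2norm g) ^ Suc n * (\<Prod>i<n. g (x i))"

lemma ntensor_permute:
  assumes "\<pi> permutes {..<n}"
  shows "ntensor n g (x \<circ> \<pi>) = ntensor n g x"
  using prod.permute[OF assms, of "\<lambda>i. g (x i)"] by (simp add: ntensor_def comp_def)

definition ntensor_inner :: "nat \<Rightarrow> (real \<Rightarrow> real) \<Rightarrow> (real \<Rightarrow> real) \<Rightarrow> real" where
  "ntensor_inner n g h = inverse (l2norm g) ^ Suc n * inverse (l2norm h) ^ Suc n * l2inner g h ^ n"

lemma integral_ntensor_mult:
  assumes "L2 g" "L2 h"
  shows "(\<integral>x. ntensor n g x * ntensor n h x \<partial>Rn n) = ntensor_inner n g h"
proof -
  have "ntensor n g x * ntensor n h x
      = inverse (l2norm g) ^ Suc n * inverse (l2norm h) ^ Suc n * (\<Prod>i<n. g (x i) * h (x i))" for x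
    by (simp add: ntensor_def prod.distrib mult_ac)
  then show ?thesis
    using integral_Rn_prod[OF L2_integrable_mult[OF assms], of n] by (simp add: ntensor_inner_def l2inner_def)
qed

lemma nn_integral_ntensor_mult_le:
  assumes "L2 g" "L2 h"
  shows "(\<integral>\<^sup>+x. ennreal \<bar>ntensor n g x * ntensor n h x\<bar> \<partial>Rn n)
    \<le> ennreal (inverse (l2norm g) * inverse (l2norm h))"
proof -
  define c where "c = inverse (l2norm g) ^ Suc n * inverse (l2norm h) ^ Suc n"
  have "\<bar>ntensor n g x * ntensor n h x\<bar> = c * (\<Prod>i<n. \<bar>g (x i) * h (x i)\<bar>)" for x
    by (simp add: ntensor_def c_def abs_mult abs_prod prod.distrib l2norm_nonneg mult_ac)
  then have "(\<integral>\<^sup>+x. ennreal \<bar>ntensor n g x * ntensor n h x\<bar> \<partial>Rn n)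
      \<le> ennreal (c * (l2norm g * l2norm h) ^ n)"
    using nn_integral_Rn_prod_abs_le[OF L2_integrable_mult[OF assms] L2_integral_abs_mult_le[OF assms]]
    by (simp add: c_def l2norm_nonneg)
  also have "c * (l2norm g * l2norm h) ^ n = inverse (l2norm g) * inverse (l2norm h)"
    unfolding c_def by (rule inverse_power_Suc_mult_power2) (simp_all add: l2norm_nonneg)
  finally show ?thesis .
qed

lemma integral_ntensor_test:
  fixes \<xi> :: "real \<Rightarrow> complex"
  assumes "L2 g" "\<xi> \<in> borel_measurable lborel" "L2 (\<lambda>y. norm (\<xi> y))"
  shows "(\<integral>x. of_real (ntensor n g x) * (\<Prod>i<n. \<xi> (x i)) \<partial>Rn n)
    = of_real (inverse (l2norm g) ^ Suc n) * cpair \<xi> g ^ n"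
proof -
  have "of_real (ntensor n g x) * (\<Prod>i<n. \<xi> (x i))
      = of_real (inverse (l2norm g) ^ Suc n) * (\<Prod>i<n. of_real (g (x i)) * \<xi> (x i))" for x
    by (simp add: ntensor_def prod.distrib mult_ac)
  then show ?thesis
    using integral_Rn_prod[OF integrable_L2_mult_complex[OF assms], of n]
    by (simp add: cpair_def mult.commute)
qed

lemma nn_integral_ntensor_test_le:
  fixes \<xi> :: "real \<Rightarrow> complex"
  assumes "L2 g" "L2 (\<lambda>y. norm (\<xi> y))"
  shows "(\<integral>\<^sup>+x. ennreal (norm (of_real (ntensor n g x) * (\<Prod>i<n. \<xi> (x i)))) \<partial>Rn n)
    \<le> ennreal (l2norm (\<lambda>y. norm (\<xi> y)) ^ n * inverse (l2norm g))"
proof -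
  define c where "c = inverse (l2norm g) ^ Suc n"
  have "norm (of_real (ntensor n g x) * (\<Prod>i<n. \<xi> (x i))) = c * (\<Prod>i<n. \<bar>g (x i) * norm (\<xi> (x i))\<bar>)" for x
    unfolding norm_mult norm_of_real
    by (simp add: ntensor_def c_def prod_norm abs_mult abs_prod prod.distrib l2norm_nonneg mult_ac)
  then have "(\<integral>\<^sup>+x. ennreal (norm (of_real (ntensor n g x) * (\<Prod>i<n. \<xi> (x i)))) \<partial>Rn n)
      \<le> ennreal (c * (l2norm g * l2norm (\<lambda>y. norm (\<xi> y))) ^ n)"
    using nn_integral_Rn_prod_abs_le[OF L2_integrable_mult[OF assms] L2_integral_abs_mult_le[OF assms]]
    by (simp add: c_def l2norm_nonneg)
  also have "c * (l2norm g * l2norm (\<lambda>y. norm (\<xi> y))) ^ n = l2norm (\<lambda>y. norm (\<xi> y)) ^ n * inverse (l2norm g)"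
    unfolding c_def by (simp only: inverse_power_Suc_mult_power l2norm_nonneg mult.commute)
  finally show ?thesis .
qed

section \<open>The chaos coefficients of Donsker's delta\<close>

lemma sums_even_terms_iff:
  assumes "\<And>n. odd n \<Longrightarrow> f n = 0"
  shows "(\<lambda>m. f (2 * m)) sums c \<longleftrightarrow> f sums c"
proof (rule sums_mono_reindex)
  show "strict_mono ((*) (2::nat))"
    by (simp add: strict_mono_def)
  show "f n = 0" if "n \<notin> range ((*) 2)" for n
    using that by (metis assms evenE rangeI)
qed

(* Taylor coefficients of exp (-z^2/2) / sqrt (2 pi) *)
definition donsker_coef :: "nat \<Rightarrow> real" where
  "donsker_coef n =
    (if even n then (-1) ^ (n div 2) / (sqrt (2 * pi) * 2 ^ (n div 2) * fact (n div 2)) else 0)"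

lemma donsker_coef_even: "donsker_coef (2 * m) = (-1) ^ m / (sqrt (2 * pi) * 2 ^ m * fact m)"
  by (simp add: donsker_coef_def)

lemma donsker_coef_odd: "odd n \<Longrightarrow> donsker_coef n = 0"
  by (simp add: donsker_coef_def)

lemma donsker_coef_sums:
  fixes N :: real and c :: complex
  shows "(\<lambda>n. of_real (donsker_coef n * inverse N ^ Suc n) * c ^ n)
    sums (of_real (1 / (sqrt (2 * pi) * N)) * exp (- c\<^sup>2 / of_real (2 * N\<^sup>2)))"
proof -
  define z where "z = - c\<^sup>2 / of_real (2 * N\<^sup>2)"
  have "of_real (donsker_coef (2 * m) * inverse N ^ Suc (2 * m)) * c ^ (2 * m)
      = of_real (1 / (sqrt (2 * pi) * N)) * (z ^ m /\<^sub>R fact m)" for m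
  proof (cases "N = 0")
    case False
    have N: "inverse N ^ Suc (2 * m) = inverse N * inverse (N\<^sup>2) ^ m"
      by (simp add: power_mult power_inverse)
    have c: "c ^ (2 * m) = (c\<^sup>2) ^ m"
      by (simp add: power_mult)
    have "z = (-1) * (c\<^sup>2 / (2 * of_real N ^ 2))"
      by (simp add: z_def)
    then have z: "z ^ m = (-1) ^ m * (c\<^sup>2) ^ m / (2 ^ m * (of_real N ^ 2) ^ m)"
      by (simp only: power_mult_distrib power_divide times_divide_eq_right)
    show ?thesis
      unfolding donsker_coef_even N c z using False
      by (simp add: power_divide power_mult_distrib scaleR_conv_of_real field_simps)
  qed simp
  moreover have "(\<lambda>m. of_real (1 / (sqrt (2 * pi) * N)) * (z ^ m /\<^sub>R fact m))
      sums (of_real (1 / (sqrt (2 * pi) * N)) * exp z)"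
    by (intro sums_mult exp_converges)
  ultimately show ?thesis
    by (subst sums_even_terms_iff[symmetric]) (simp_all add: donsker_coef_odd z_def)
qed

lemma summable_abs_donsker_coef: "summable (\<lambda>n. \<bar>donsker_coef n\<bar> * X ^ n)"
proof -
  have "\<bar>donsker_coef (2 * m)\<bar> * X ^ (2 * m) = 1 / sqrt (2 * pi) * ((X\<^sup>2 / 2) ^ m /\<^sub>R fact m)" for m
    unfolding power_mult donsker_coef_even by (simp add: abs_mult power_divide field_simps)
  moreover have "(\<lambda>m. 1 / sqrt (2 * pi) * ((X\<^sup>2 / 2) ^ m /\<^sub>R fact m)) sums (1 / sqrt (2 * pi) * exp (X\<^sup>2 / 2))"
    by (intro sums_mult exp_converges)
  ultimately have "(\<lambda>n. \<bar>donsker_coef n\<bar> * X ^ n) sums (1 / sqrt (2 * pi) * exp (X\<^sup>2 / 2))"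
    by (subst sums_even_terms_iff[symmetric]) (simp_all add: donsker_coef_odd)
  then show ?thesis
    by (rule sums_summable)
qed

lemma donsker_coef_weight:
  "(1 + real (2 * m)) * fact (2 * m) * (donsker_coef (2 * m))\<^sup>2 = pochhammer (3/2) m / fact m / (2 * pi)"
proof -
  have "(1 + real (2 * m)) * fact (2 * m) = (fact (Suc (2 * m)) :: real)"
    by simp
  also have "\<dots> = pochhammer 2 (2 * m)"
    by (simp add: pochhammer_fact pochhammer_rec)
  also have "\<dots> = 4 ^ m * fact m * pochhammer (3/2) m"
    using pochhammer_double[of "1 :: real" m] by (simp add: pochhammer_fact power_mult)
  moreover have "(donsker_coef (2 * m))\<^sup>2 = 1 / (2 * pi * 4 ^ m * (fact m)\<^sup>2)"
  proof -
    have "((2::real) ^ m)\<^sup>2 = 4 ^ m"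
      by (simp add: power_even_eq[symmetric] power_mult)
    then show ?thesis
      by (simp add: donsker_coef_even power_mult_distrib power_divide flip: power_mult)
  qed
  ultimately show ?thesis
    by (simp add: power2_eq_square field_simps)
qed

lemma pochhammer_three_halves_sums:
  fixes y :: real
  assumes "\<bar>y\<bar> < 1"
  shows "(\<lambda>m. pochhammer (3/2) m / fact m * y ^ m) sums (1 - y) powr (-3/2)"
proof -
  have "(\<lambda>m. ((-3/2) gchoose m) * (-y) ^ m) sums (1 + (-y)) powr (-3/2)"
    using assms by (intro gen_binomial_real) simp
  moreover have "((-3/2) gchoose m) * (-y) ^ m = pochhammer (3/2) m / fact m * y ^ m" for m
  proof -
    have "((-3/2) gchoose m) * (-y) ^ m = ((-1) ^ m * (-1) ^ m) * (pochhammer (3/2) m / fact m * y ^ m)"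
      by (simp add: gbinomial_pochhammer power_minus[of y])
    also have "(-1::real) ^ m * (-1) ^ m = 1"
      by (simp flip: power_add)
    finally show ?thesis by simp
  qed
  ultimately show ?thesis by simp
qed

lemma power2_powr_neg_three_halves:
  fixes x :: real
  assumes "x > 0"
  shows "(x\<^sup>2) powr (-3/2) = inverse (x ^ 3)"
proof -
  have "(x\<^sup>2) powr (-3/2) = (x powr 2) powr (-3/2)"
    using assms by (simp add: powr_realpow)
  also have "\<dots> = x powr (- 3)"
    by (simp add: powr_powr)
  also have "\<dots> = inverse (x ^ 3)"
    using assms by (simp add: powr_minus powr_realpow[of x 3, simplified])
  finally show ?thesis .
qed

lemma D12_norm_series_even_term:
  fixes a b L :: real
  shows "(1 + real (2 * m)) * fact (2 * m) * (donsker_coef (2 * m))\<^sup>2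
        * (inverse a ^ Suc (2 * m) * inverse b ^ Suc (2 * m) * L ^ (2 * m))
      = inverse (2 * pi * (a * b)) * (pochhammer (3/2) m / fact m * (L\<^sup>2 / (a * b)\<^sup>2) ^ m)"
proof -
  have "inverse a ^ Suc (2 * m) * inverse b ^ Suc (2 * m) = inverse (a * b) ^ Suc (2 * m)"
    by (simp add: power_mult_distrib)
  also have "\<dots> = inverse (a * b) * inverse ((a * b)\<^sup>2) ^ m"
    by (simp only: power_Suc power_mult power_inverse)
  moreover have "L ^ (2 * m) = (L\<^sup>2) ^ m"
    by (simp add: power_mult)
  ultimately show ?thesis
    unfolding donsker_coef_weight by (simp add: power_divide field_simps)
qed

lemma D12_norm_series_sums:
  fixes a b L :: real
  assumes "a > 0" "b > 0" "a\<^sup>2 * b\<^sup>2 - L\<^sup>2 > 0"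
  shows "(\<lambda>n. (1 + real n) * fact n * (donsker_coef n)\<^sup>2 * (inverse a ^ Suc n * inverse b ^ Suc n * L ^ n))
    sums ((a * b)\<^sup>2 * (a\<^sup>2 * b\<^sup>2 - L\<^sup>2) powr (-3/2) / (2 * pi))"
proof -
  define P where "P = a * b"
  define y where "y = L\<^sup>2 / P\<^sup>2"
  have P: "P > 0"
    using assms by (simp add: P_def)
  have G: "a\<^sup>2 * b\<^sup>2 - L\<^sup>2 = P\<^sup>2 * (1 - y)"
    using assms(1,2) by (simp add: P_def y_def power_mult_distrib field_simps)
  have y: "0 \<le> y" "y < 1"
    using assms(3) P by (simp_all add: G y_def zero_less_mult_iff)
  have "(1 + real (2 * m)) * fact (2 * m) * (donsker_coef (2 * m))\<^sup>2
        * (inverse a ^ Suc (2 * m) * inverse b ^ Suc (2 * m) * L ^ (2 * m))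
      = inverse (2 * pi * P) * (pochhammer (3/2) m / fact m * y ^ m)" for m
    unfolding P_def y_def by (rule D12_norm_series_even_term)
  moreover have "(\<lambda>m. inverse (2 * pi * P) * (pochhammer (3/2) m / fact m * y ^ m))
      sums (inverse (2 * pi * P) * (1 - y) powr (-3/2))"
    using y by (intro sums_mult pochhammer_three_halves_sums) simp
  moreover have "inverse (2 * pi * P) * (1 - y) powr (-3/2) = P\<^sup>2 * (P\<^sup>2 * (1 - y)) powr (-3/2) / (2 * pi)"
  proof -
    have "(P\<^sup>2 * (1 - y)) powr (-3/2) = inverse (P ^ 3) * (1 - y) powr (-3/2)"
      using P y power2_powr_neg_three_halves[OF P] by (simp add: powr_mult)
    then show ?thesis
      using P by (simp add: field_simps power3_eq_cube power2_eq_square)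
  qed
  ultimately have "(\<lambda>m. (1 + real (2 * m)) * fact (2 * m) * (donsker_coef (2 * m))\<^sup>2
        * (inverse a ^ Suc (2 * m) * inverse b ^ Suc (2 * m) * L ^ (2 * m)))
      sums ((a * b)\<^sup>2 * (a\<^sup>2 * b\<^sup>2 - L\<^sup>2) powr (-3/2) / (2 * pi))"
    unfolding G P_def by (simp only:)
  then show ?thesis
    by (subst (asm) sums_even_terms_iff) (simp_all add: donsker_coef_odd)
qed

lemma sum_D12_norm_series_le:
  fixes a b L :: real
  assumes "a > 0" "b > 0" "a\<^sup>2 * b\<^sup>2 - L\<^sup>2 > 0"
  shows "(\<Sum>n<J. (1 + real n) * fact n * (donsker_coef n)\<^sup>2 * (inverse a ^ Suc n * inverse b ^ Suc n * L ^ n))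
    \<le> (a * b)\<^sup>2 * (a\<^sup>2 * b\<^sup>2 - L\<^sup>2) powr (-3/2) / (2 * pi)"
proof -
  define t where "t n = (1 + real n) * fact n * (donsker_coef n)\<^sup>2 * (inverse a ^ Suc n * inverse b ^ Suc n * L ^ n)" for n
  have sums: "t sums ((a * b)\<^sup>2 * (a\<^sup>2 * b\<^sup>2 - L\<^sup>2) powr (-3/2) / (2 * pi))"
    unfolding t_def by (rule D12_norm_series_sums[OF assms])
  have "0 \<le> t n" for n
    using assms(1,2) by (cases "even n") (simp_all add: t_def donsker_coef_odd zero_le_even_power)
  then have "sum t {..<J} \<le> suminf t"
    by (intro sum_le_suminf sums_summable[OF sums]) auto
  then show ?thesis
    using sums by (simp add: t_def sums_iff)
qed

lemma sum_D12_norm_series_nonneg: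
  "0 \<le> (\<Sum>n<J. (1 + real n) * fact n * (donsker_coef n)\<^sup>2 * ntensor_inner n g h)"
proof (intro sum_nonneg)
  fix n
  show "0 \<le> (1 + real n) * fact n * (donsker_coef n)\<^sup>2 * ntensor_inner n g h"
    by (cases "even n") (simp_all add: donsker_coef_odd ntensor_inner_def zero_le_even_power l2norm_nonneg)
qed

section \<open>Increments and the Gram integrand\<close>

abbreviation lborel2 :: "(real \<times> real) measure" where
  "lborel2 \<equiv> lborel \<Otimes>\<^sub>M lborel"

lemma sigma_finite_lborel2: "sigma_finite_measure lborel2"
  by (simp add: lborel_prod lborel.sigma_finite_measure_axioms)

lemma sigma_finite_lborel2_pair: "sigma_finite_measure (lborel2 \<Otimes>\<^sub>M lborel2)"
  by (simp add: lborel_prod lborel.sigma_finite_measure_axioms)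

lemma simplex2_subset: "simplex2 T \<subseteq> {0..T} \<times> {0..T}"
  by (auto simp: simplex2_def)

lemma sets_simplex2[measurable]: "simplex2 T \<in> sets lborel2"
proof -
  have "simplex2 T = {p \<in> space lborel2. 0 \<le> snd p \<and> snd p \<le> fst p \<and> fst p \<le> T}"
    by (auto simp: simplex2_def space_pair_measure)
  also have "\<dots> \<in> sets lborel2"
    by measurable
  finally show ?thesis .
qed

lemma emeasure_simplex2_finite: "emeasure lborel2 (simplex2 T) < \<infinity>"
proof -
  have "emeasure lborel2 (simplex2 T) \<le> emeasure lborel2 ({0..T} \<times> {0..T})"
    by (intro emeasure_mono simplex2_subset) auto
  also have "\<dots> = emeasure lborel {0..T} * emeasure lborel {0..T}"
    by (rule lborel.emeasure_pair_measure_Times) auto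
  also have "\<dots> < \<infinity>"
    by (cases "0 \<le> T") (auto simp: ennreal_mult_less_top)
  finally show ?thesis .
qed

definition increment :: "(real \<Rightarrow> real \<Rightarrow> real) \<Rightarrow> real \<times> real \<Rightarrow> real \<Rightarrow> real" where
  "increment f p = fdiff f (fst p) (snd p)"

lemma measurable_increment:
  assumes f: "(\<lambda>(t, x). f t x) \<in> borel_measurable lborel2"
    and h: "h \<in> N \<rightarrow>\<^sub>M lborel2" and k: "k \<in> N \<rightarrow>\<^sub>M borel"
  shows "(\<lambda>z. increment f (h z) (k z)) \<in> borel_measurable N"
proof -
  have k': "k \<in> N \<rightarrow>\<^sub>M lborel"
    using k by simp
  have "(\<lambda>z. (\<lambda>(t, x). f t x) (fst (h z), k z)) \<in> borel_measurable N"
    by (rule measurable_compose[OF _ f]) (use h k' in measurable)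
  moreover have "(\<lambda>z. (\<lambda>(t, x). f t x) (snd (h z), k z)) \<in> borel_measurable N"
    by (rule measurable_compose[OF _ f]) (use h k' in measurable)
  ultimately show ?thesis
    by (simp add: increment_def fdiff_def borel_measurable_diff)
qed

lemma borel_measurable_l2norm_increment:
  assumes "(\<lambda>(t, x). f t x) \<in> borel_measurable lborel2"
  shows "(\<lambda>p. l2norm (increment f p)) \<in> borel_measurable lborel2"
proof -
  have "(\<lambda>(p, y). (increment f p y)\<^sup>2) \<in> borel_measurable (lborel2 \<Otimes>\<^sub>M lborel)"
    using measurable_increment[OF assms, of fst "lborel2 \<Otimes>\<^sub>M lborel" snd]
    by (simp add: case_prod_beta')
  then have "(\<lambda>p. \<integral>y. (increment f p y)\<^sup>2 \<partial>lborel) \<in> borel_measurable lborel2"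
    by (rule lborel.borel_measurable_lebesgue_integral)
  then show ?thesis
    unfolding l2norm_def by measurable
qed

lemma L2_increment:
  assumes "\<forall>t\<in>{0..T}. L2 (f t)" "p \<in> simplex2 T"
  shows "L2 (increment f p)"
  using assms simplex2_subset[of T] unfolding increment_def fdiff_def
  by (intro L2_diff) (auto simp: mem_Times_iff)

lemma gram_integrand_increment:
  "gram_integrand f (p, q) =
    (let G = (l2norm (increment f p))\<^sup>2 * (l2norm (increment f q))\<^sup>2 - (l2inner (increment f p) (increment f q))\<^sup>2
     in if G > 0 then ennreal (G powr (-3/2)) else \<infinity>)"
  by (cases p; cases q) (simp add: gram_integrand_def increment_def Let_def)

lemma gram_integrand_ge:
  "ennreal (inverse (l2norm (increment f p)) ^ 3 * inverse (l2norm (increment f q)) ^ 3)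
    \<le> gram_integrand f (p, q)"
proof -
  define a b where "a = l2norm (increment f p)" and "b = l2norm (increment f q)"
  define G where "G = a\<^sup>2 * b\<^sup>2 - (l2inner (increment f p) (increment f q))\<^sup>2"
  show ?thesis
  proof (cases "G > 0")
    case True
    have "G \<le> (a * b)\<^sup>2"
      by (simp add: G_def power_mult_distrib)
    moreover have "a * b \<ge> 0"
      by (simp add: a_def b_def l2norm_nonneg)
    ultimately have ab: "a * b > 0"
      using True by (auto simp: le_less)
    have "((a * b)\<^sup>2) powr (-3/2) \<le> G powr (-3/2)"
      using True \<open>G \<le> (a * b)\<^sup>2\<close> by (intro powr_mono2') auto
    then have "inverse a ^ 3 * inverse b ^ 3 \<le> G powr (-3/2)"
      using power2_powr_neg_three_halves[OF ab] by (simp add: power_mult_distrib power_inverse)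
    then show ?thesis
      using True by (simp add: gram_integrand_increment a_def b_def G_def ennreal_leI)
  qed (simp add: gram_integrand_increment a_def b_def G_def)
qed

lemma nn_integral_inverse_l2norm_increment_cube_finite:
  assumes f: "(\<lambda>(t, x). f t x) \<in> borel_measurable lborel2"
    and gram: "(\<integral>\<^sup>+ q. indicator (simplex2 T \<times> simplex2 T) q * gram_integrand f q \<partial>(lborel2 \<Otimes>\<^sub>M lborel2)) < \<infinity>"
  shows "(\<integral>\<^sup>+p. indicator (simplex2 T) p * ennreal (inverse (l2norm (increment f p)) ^ 3) \<partial>lborel2) < \<infinity>"
proof -
  note [measurable] = borel_measurable_l2norm_increment[OF f]
  define g where "g p = indicator (simplex2 T) p * ennreal (inverse (l2norm (increment f p)) ^ 3)" for p
  have [measurable]: "g \<in> borel_measurable lborel2"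
    unfolding g_def by measurable
  have "(\<integral>\<^sup>+p. g p \<partial>lborel2) * (\<integral>\<^sup>+p. g p \<partial>lborel2) = (\<integral>\<^sup>+z. g (fst z) * g (snd z) \<partial>(lborel2 \<Otimes>\<^sub>M lborel2))"
    by (rule nn_integral_fst_mult_snd[symmetric]) (auto intro: sigma_finite_lborel2)
  also have "\<dots> \<le> (\<integral>\<^sup>+q. indicator (simplex2 T \<times> simplex2 T) q * gram_integrand f q \<partial>(lborel2 \<Otimes>\<^sub>M lborel2))"
  proof (intro nn_integral_mono)
    fix z :: "(real \<times> real) \<times> (real \<times> real)"
    show "g (fst z) * g (snd z) \<le> indicator (simplex2 T \<times> simplex2 T) z * gram_integrand f z"
      using gram_integrand_ge[of f "fst z" "snd z"]
      by (cases z) (auto simp: g_def indicator_def ennreal_mult l2norm_nonneg)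
  qed
  also have "\<dots> < \<infinity>"
    by (rule gram)
  finally show ?thesis
    by (auto simp: g_def ennreal_mult_less_top)
qed

lemma le_one_plus_power3:
  fixes u :: real
  assumes "u \<ge> 0"
  shows "u \<le> 1 + u ^ 3"
proof (cases "u \<le> 1")
  case False
  then have "u * 1 \<le> u * (u * u)"
    using assms by (intro mult_left_mono) (auto intro: less_1_mult[THEN less_imp_le])
  then show ?thesis
    by (simp add: power3_eq_cube)
qed (use assms zero_le_power[OF assms, of 3] in linarith)

lemma integrable_inverse_l2norm_increment:
  assumes f: "(\<lambda>(t, x). f t x) \<in> borel_measurable lborel2"
    and gram: "(\<integral>\<^sup>+ q. indicator (simplex2 T \<times> simplex2 T) q * gram_integrand f q \<partial>(lborel2 \<Otimes>\<^sub>M lborel2)) < \<infinity>"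
  shows "integrable lborel2 (\<lambda>p. indicator (simplex2 T) p * inverse (l2norm (increment f p)))"
proof (rule integrableI_bounded)
  note [measurable] = borel_measurable_l2norm_increment[OF f]
  show "(\<lambda>p. indicator (simplex2 T) p * inverse (l2norm (increment f p))) \<in> borel_measurable lborel2"
    by measurable
  have "ennreal (norm (indicator (simplex2 T) p * inverse (l2norm (increment f p))))
      \<le> indicator (simplex2 T) p + indicator (simplex2 T) p * ennreal (inverse (l2norm (increment f p)) ^ 3)" for p
  proof -
    have "ennreal (inverse (l2norm (increment f p))) \<le> 1 + ennreal (inverse (l2norm (increment f p)) ^ 3)"
      using le_one_plus_power3 by (simp add: l2norm_nonneg flip: ennreal_plus ennreal_1 ennreal_leI)
    then show ?thesis
      by (simp add: indicator_def l2norm_nonneg)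
  qed
  then have "(\<integral>\<^sup>+p. ennreal (norm (indicator (simplex2 T) p * inverse (l2norm (increment f p)))) \<partial>lborel2)
      \<le> (\<integral>\<^sup>+p. indicator (simplex2 T) p + indicator (simplex2 T) p * ennreal (inverse (l2norm (increment f p)) ^ 3) \<partial>lborel2)"
    by (rule nn_integral_mono)
  also have "\<dots> = emeasure lborel2 (simplex2 T)
      + (\<integral>\<^sup>+p. indicator (simplex2 T) p * ennreal (inverse (l2norm (increment f p)) ^ 3) \<partial>lborel2)"
    by (simp add: nn_integral_add nn_integral_indicator[OF sets_simplex2])
  also have "\<dots> < \<infinity>"
    using emeasure_simplex2_finite nn_integral_inverse_l2norm_increment_cube_finite[OF f gram] by simp
  finally show "(\<integral>\<^sup>+p. ennreal (norm (indicator (simplex2 T) p * inverse (l2norm (increment f p)))) \<partial>lborel2) < \<infinity>" .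
qed

lemma sum_D12_norm_series_le_gram:
  assumes "l2norm (increment f p) \<le> M" "l2norm (increment f q) \<le> M"
  shows "ennreal (\<Sum>n<J. (1 + real n) * fact n * (donsker_coef n)\<^sup>2 * ntensor_inner n (increment f p) (increment f q))
    \<le> ennreal ((M\<^sup>2 + 1)\<^sup>2 / (2 * pi)) * gram_integrand f (p, q)"
proof -
  define a b L where "a = l2norm (increment f p)" and "b = l2norm (increment f q)"
    and "L = l2inner (increment f p) (increment f q)"
  define G where "G = a\<^sup>2 * b\<^sup>2 - L\<^sup>2"
  have ab: "0 \<le> a" "0 \<le> b" "a \<le> M" "b \<le> M"
    using assms by (simp_all add: a_def b_def l2norm_nonneg)
  \<comment> \<open>the constant is kept positive so that the bound also holds where the Gram
    integrand is infinite\<close>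
  have M: "M\<^sup>2 + 1 > 0"
    using add_nonneg_pos[OF zero_le_power2[of M] zero_less_one] .
  then have c: "(M\<^sup>2 + 1)\<^sup>2 / (2 * pi) > 0"
    by simp
  show ?thesis
  proof (cases "G > 0")
    case False
    then show ?thesis
      using M c by (simp add: gram_integrand_increment a_def b_def L_def G_def ennreal_mult_top)
  next
    case True
    have "G \<le> (a * b)\<^sup>2"
      by (simp add: G_def power_mult_distrib)
    with True ab have pos: "a > 0" "b > 0"
      by (auto simp: le_less)
    have "(\<Sum>n<J. (1 + real n) * fact n * (donsker_coef n)\<^sup>2 * ntensor_inner n (increment f p) (increment f q))
        \<le> (a * b)\<^sup>2 * G powr (-3/2) / (2 * pi)"
      using sum_D12_norm_series_le[OF pos True[unfolded G_def]]
      by (simp add: ntensor_inner_def a_def b_def L_def G_def)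
    also have "\<dots> \<le> (M\<^sup>2 + 1)\<^sup>2 / (2 * pi) * G powr (-3/2)"
    proof -
      have "a * b \<le> M\<^sup>2 + 1"
        using mult_mono[OF ab(3,4)] ab by (simp add: power2_eq_square)
      then have "(a * b)\<^sup>2 \<le> (M\<^sup>2 + 1)\<^sup>2"
        using ab by (intro power_mono) auto
      then show ?thesis
        by (simp add: divide_right_mono mult_right_mono)
    qed
    finally show ?thesis
      using True c by (simp add: gram_integrand_increment a_def b_def L_def G_def ennreal_mult[symmetric] ennreal_leI)
  qed
qed

section \<open>The chaos expansion of the self-intersection local time\<close>

definition sil_kernel :: "real \<Rightarrow> (real \<Rightarrow> real \<Rightarrow> real) \<Rightarrow> nat \<Rightarrow> (nat \<Rightarrow> real) \<Rightarrow> real" where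
  "sil_kernel T f n x =
    donsker_coef n * (\<integral>p. indicator (simplex2 T) p * ntensor n (increment f p) x \<partial>lborel2)"

(* S-transform at xi of the n-th chaos of delta(X_t - X_s) at p = (t, s), cut off outside the simplex *)
definition sil_chaos_term :: "real \<Rightarrow> (real \<Rightarrow> real \<Rightarrow> real) \<Rightarrow> (real \<Rightarrow> complex) \<Rightarrow> nat \<Rightarrow> real \<times> real \<Rightarrow> complex" where
  "sil_chaos_term T f \<xi> n p = of_real (donsker_coef n * indicator (simplex2 T) p
    * inverse (l2norm (increment f p)) ^ Suc n) * cpair \<xi> (increment f p) ^ n"

lemma sil_chaos_term_sums:
  "(\<lambda>n. sil_chaos_term T f \<xi> n p) sums (indicator (simplex2 T) p *\<^sub>R sil_integrand f \<xi> p)"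
proof (cases "p \<in> simplex2 T")
  case True
  then show ?thesis
    using donsker_coef_sums[of "l2norm (increment f p)" "cpair \<xi> (increment f p)"]
    by (cases p) (simp add: sil_chaos_term_def sil_integrand_def S_donsker_def increment_def)
qed (simp add: sil_chaos_term_def)

locale sil_setting =
  fixes T :: real and f :: "real \<Rightarrow> real \<Rightarrow> real"
  assumes borel_measurable_f: "(\<lambda>(t, x). f t x) \<in> borel_measurable lborel2"
    and L2_f: "\<forall>t\<in>{0..T}. L2 (f t)"
    and integrable_inverse_norm:
      "integrable lborel2 (\<lambda>p. indicator (simplex2 T) p * inverse (l2norm (increment f p)))"
begin

abbreviation incr_tensor :: "nat \<Rightarrow> real \<times> real \<Rightarrow> (nat \<Rightarrow> real) \<Rightarrow> real" where
  "incr_tensor n p x \<equiv> indicator (simplex2 T) p * ntensor n (increment f p) x"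

lemma measurable_increment_f[measurable (raw)]:
  "h \<in> N \<rightarrow>\<^sub>M lborel2 \<Longrightarrow> k \<in> N \<rightarrow>\<^sub>M borel \<Longrightarrow> (\<lambda>z. increment f (h z) (k z)) \<in> borel_measurable N"
  by (rule measurable_increment[OF borel_measurable_f])

lemma borel_measurable_l2norm_increment_f[measurable]:
  "(\<lambda>p. l2norm (increment f p)) \<in> borel_measurable lborel2"
  by (rule borel_measurable_l2norm_increment[OF borel_measurable_f])

lemma measurable_ntensor_increment[measurable (raw)]:
  assumes [measurable]: "h \<in> N \<rightarrow>\<^sub>M lborel2" and k: "k \<in> N \<rightarrow>\<^sub>M Rn n"
  shows "(\<lambda>z. ntensor n (increment f (h z)) (k z)) \<in> borel_measurable N"
proof -
  have [measurable]: "(\<lambda>z. k z i) \<in> borel_measurable N" if "i \<in> {..<n}" for i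
    using measurable_compose[OF k measurable_Rn_coordinate[OF that]] by simp
  show ?thesis
    unfolding ntensor_def by measurable
qed

lemma borel_measurable_gram_integrand[measurable]:
  "gram_integrand f \<in> borel_measurable (lborel2 \<Otimes>\<^sub>M lborel2)"
proof -
  have "(\<lambda>z. increment f (fst (fst z)) (snd z) * increment f (snd (fst z)) (snd z))
      \<in> borel_measurable ((lborel2 \<Otimes>\<^sub>M lborel2) \<Otimes>\<^sub>M lborel)"
    by measurable
  then have [measurable]: "(\<lambda>w. l2inner (increment f (fst w)) (increment f (snd w)))
      \<in> borel_measurable (lborel2 \<Otimes>\<^sub>M lborel2)"
    unfolding l2inner_def by (intro lborel.borel_measurable_lebesgue_integral) (simp add: case_prod_beta')
  have "gram_integrand f = (\<lambda>w. let G = (l2norm (increment f (fst w)))\<^sup>2 * (l2norm (increment f (snd w)))\<^sup>2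
      - (l2inner (increment f (fst w)) (increment f (snd w)))\<^sup>2 in if G > 0 then ennreal (G powr (-3/2)) else \<infinity>)"
    by (rule ext) (metis gram_integrand_increment prod.collapse)
  also have "\<dots> \<in> borel_measurable (lborel2 \<Otimes>\<^sub>M lborel2)"
    unfolding Let_def by measurable
  finally show ?thesis .
qed

lemma L2_increment_f: "p \<in> simplex2 T \<Longrightarrow> L2 (increment f p)"
  by (rule L2_increment[OF L2_f])

lemma integrable_incr_tensor_pair:
  "integrable (Rn n \<Otimes>\<^sub>M (lborel2 \<Otimes>\<^sub>M lborel2))
     (\<lambda>z. incr_tensor n (fst (snd z)) (fst z) * incr_tensor n (snd (snd z)) (fst z))"
proof (rule integrableI_bounded)
  interpret pair_sigma_finite "Rn n" "lborel2 \<Otimes>\<^sub>M lborel2"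
    by (intro pair_sigma_finite.intro sigma_finite_Rn sigma_finite_lborel2_pair)
  show meas: "(\<lambda>z. incr_tensor n (fst (snd z)) (fst z) * incr_tensor n (snd (snd z)) (fst z))
      \<in> borel_measurable (Rn n \<Otimes>\<^sub>M (lborel2 \<Otimes>\<^sub>M lborel2))"
    by measurable
  define g where "g p = ennreal (indicator (simplex2 T) p * inverse (l2norm (increment f p)))" for p
  have [measurable]: "g \<in> borel_measurable lborel2"
    unfolding g_def by measurable
  have "(\<integral>\<^sup>+z. ennreal (norm (incr_tensor n (fst (snd z)) (fst z) * incr_tensor n (snd (snd z)) (fst z)))
        \<partial>(Rn n \<Otimes>\<^sub>M (lborel2 \<Otimes>\<^sub>M lborel2)))
      = (\<integral>\<^sup>+w. (\<integral>\<^sup>+x. ennreal \<bar>incr_tensor n (fst w) x * incr_tensor n (snd w) x\<bar> \<partial>Rn n)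
          \<partial>(lborel2 \<Otimes>\<^sub>M lborel2))"
    by (subst nn_integral_snd[symmetric]) (use meas in auto)
  also have "\<dots> \<le> (\<integral>\<^sup>+w. g (fst w) * g (snd w) \<partial>(lborel2 \<Otimes>\<^sub>M lborel2))"
  proof (intro nn_integral_mono)
    fix w :: "(real \<times> real) \<times> (real \<times> real)"
    show "(\<integral>\<^sup>+x. ennreal \<bar>incr_tensor n (fst w) x * incr_tensor n (snd w) x\<bar> \<partial>Rn n) \<le> g (fst w) * g (snd w)"
    proof (cases "fst w \<in> simplex2 T \<and> snd w \<in> simplex2 T")
      case True
      then show ?thesis
        using nn_integral_ntensor_mult_le[OF L2_increment_f L2_increment_f, of "fst w" "snd w" n]
        by (simp add: g_def ennreal_mult l2norm_nonneg)
    qed (auto simp: g_def)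
  qed
  also have "\<dots> = (\<integral>\<^sup>+p. g p \<partial>lborel2) * (\<integral>\<^sup>+p. g p \<partial>lborel2)"
    by (rule nn_integral_fst_mult_snd) (auto intro: sigma_finite_lborel2)
  also have "\<dots> < \<infinity>"
    using integrable_inverse_norm
    by (simp add: integrable_iff_bounded g_def ennreal_mult_less_top l2norm_nonneg)
  finally show "(\<integral>\<^sup>+z. ennreal (norm (incr_tensor n (fst (snd z)) (fst z) * incr_tensor n (snd (snd z)) (fst z)))
      \<partial>(Rn n \<Otimes>\<^sub>M (lborel2 \<Otimes>\<^sub>M lborel2))) < \<infinity>" .
qed

lemma integral_incr_tensor_mult:
  "(\<integral>x. incr_tensor n p x * incr_tensor n q x \<partial>Rn n)
    = indicator (simplex2 T \<times> simplex2 T) (p, q) * ntensor_inner n (increment f p) (increment f q)"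
proof (cases "p \<in> simplex2 T \<and> q \<in> simplex2 T")
  case True
  then show ?thesis
    using integral_ntensor_mult[OF L2_increment_f L2_increment_f] by (simp add: mult_ac)
qed auto

lemma borel_measurable_sil_kernel[measurable]: "sil_kernel T f n \<in> borel_measurable (Rn n)"
proof -
  have "(\<lambda>x. \<integral>p. incr_tensor n p x \<partial>lborel2) \<in> borel_measurable (Rn n)"
    by (rule sigma_finite_measure.borel_measurable_lebesgue_integral[OF sigma_finite_lborel2]) measurable
  then show ?thesis
    unfolding sil_kernel_def by measurable
qed

lemma sil_kernel_square:
  shows "integrable (Rn n) (\<lambda>x. (sil_kernel T f n x)\<^sup>2)"
    and "integrable (lborel2 \<Otimes>\<^sub>M lborel2)
      (\<lambda>w. indicator (simplex2 T \<times> simplex2 T) w * ntensor_inner n (increment f (fst w)) (increment f (snd w)))"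
    and "knorm2 n (sil_kernel T f n) = (donsker_coef n)\<^sup>2 * (\<integral>w. indicator (simplex2 T \<times> simplex2 T) w
      * ntensor_inner n (increment f (fst w)) (increment f (snd w)) \<partial>(lborel2 \<Otimes>\<^sub>M lborel2))"
proof -
  interpret pair_sigma_finite "Rn n" "lborel2 \<Otimes>\<^sub>M lborel2"
    by (intro pair_sigma_finite.intro sigma_finite_Rn sigma_finite_lborel2_pair)
  define H where "H x w = incr_tensor n (fst w) x * incr_tensor n (snd w) x" for x w
  have H: "integrable (Rn n \<Otimes>\<^sub>M (lborel2 \<Otimes>\<^sub>M lborel2)) (case_prod H)"
    using integrable_incr_tensor_pair[of n] by (simp add: H_def case_prod_beta')
  have inner: "(\<integral>x. H x w \<partial>Rn n)
      = indicator (simplex2 T \<times> simplex2 T) w * ntensor_inner n (increment f (fst w)) (increment f (snd w))" for w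
    using integral_incr_tensor_mult[of n "fst w" "snd w"] by (simp add: H_def)
  have ae: "AE x in Rn n. (sil_kernel T f n x)\<^sup>2 = (donsker_coef n)\<^sup>2 * (\<integral>w. H x w \<partial>(lborel2 \<Otimes>\<^sub>M lborel2))"
    using AE_integrable_fst[OF H]
  proof eventually_elim
    case (elim x)
    then show ?case
      unfolding sil_kernel_def H_def power_mult_distrib
      by (subst integral_power2_eq_integral_pair) (auto intro: sigma_finite_lborel2)
  qed
  have i1: "integrable (Rn n) (\<lambda>x. (donsker_coef n)\<^sup>2 * (\<integral>w. H x w \<partial>(lborel2 \<Otimes>\<^sub>M lborel2)))"
    using integrable_fst[OF H] by simp
  show "integrable (Rn n) (\<lambda>x. (sil_kernel T f n x)\<^sup>2)"
    by (rule integrable_cong_AE_imp[OF i1 _ AE_symmetric[OF ae]]) measurable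
  show "integrable (lborel2 \<Otimes>\<^sub>M lborel2)
      (\<lambda>w. indicator (simplex2 T \<times> simplex2 T) w * ntensor_inner n (increment f (fst w)) (increment f (snd w)))"
    using integrable_snd[OF H] by (simp add: inner)
  have "knorm2 n (sil_kernel T f n) = (\<integral>x. (donsker_coef n)\<^sup>2 * (\<integral>w. H x w \<partial>(lborel2 \<Otimes>\<^sub>M lborel2)) \<partial>Rn n)"
    unfolding knorm2_def by (rule integral_cong_AE[OF _ borel_measurable_integrable[OF i1] ae]) measurable
  also have "\<dots> = (donsker_coef n)\<^sup>2 * (\<integral>w. \<integral>x. H x w \<partial>Rn n \<partial>(lborel2 \<Otimes>\<^sub>M lborel2))"
    using integral_fst[OF H] integral_snd[OF H] by simp
  finally show "knorm2 n (sil_kernel T f n) = (donsker_coef n)\<^sup>2 * (\<integral>w. indicator (simplex2 T \<times> simplex2 T) w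
      * ntensor_inner n (increment f (fst w)) (increment f (snd w)) \<partial>(lborel2 \<Otimes>\<^sub>M lborel2))"
    by (simp add: inner)
qed

lemma sym_L2_kernel_sil_kernel: "sym_L2_kernel n (sil_kernel T f n)"
  unfolding sym_L2_kernel_def using sil_kernel_square(1)
  by (simp add: sil_kernel_def ntensor_permute)

lemma AE_sum_D12_norm_series_le_gram:
  assumes "AE p in lborel2. p \<in> {0..T} \<times> {0..T} \<longrightarrow> l2norm (increment f p) \<le> M"
  shows "AE w in lborel2 \<Otimes>\<^sub>M lborel2. ennreal (indicator (simplex2 T \<times> simplex2 T) w
      * (\<Sum>n<J. (1 + real n) * fact n * (donsker_coef n)\<^sup>2 * ntensor_inner n (increment f (fst w)) (increment f (snd w))))
    \<le> ennreal ((M\<^sup>2 + 1)\<^sup>2 / (2 * pi)) * (indicator (simplex2 T \<times> simplex2 T) w * gram_integrand f w)"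
proof -
  define Q where "Q p \<longleftrightarrow> (p \<in> simplex2 T \<longrightarrow> l2norm (increment f p) \<le> M)" for p
  have "AE p in lborel2. Q p"
    using assms by (rule eventually_mono) (use simplex2_subset in \<open>auto simp: Q_def\<close>)
  then have "AE w in lborel2 \<Otimes>\<^sub>M lborel2. Q (fst w) \<and> Q (snd w)"
    unfolding Q_def by (intro AE_pair_fst_snd sigma_finite_lborel2) measurable
  then show ?thesis
    by eventually_elim (auto simp: Q_def indicator_def mem_Times_iff intro: sum_D12_norm_series_le_gram)
qed

lemma summable_D12_norm_sil_kernel:
  assumes norm_le: "AE p in lborel2. p \<in> {0..T} \<times> {0..T} \<longrightarrow> l2norm (increment f p) \<le> M"
    and gram: "(\<integral>\<^sup>+q. indicator (simplex2 T \<times> simplex2 T) q * gram_integrand f q \<partial>(lborel2 \<Otimes>\<^sub>M lborel2)) < \<infinity>"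
  shows "summable (\<lambda>n. (1 + real n powr 1) * fact n * knorm2 n (sil_kernel T f n))"
proof (rule summableI_nonneg_bounded)
  show "0 \<le> (1 + real n powr 1) * fact n * knorm2 n (sil_kernel T f n)" for n
    by (simp add: knorm2_def)
next
  fix J
  define V where "V w = (\<Sum>n<J. (1 + real n) * fact n * (donsker_coef n)\<^sup>2
    * (indicator (simplex2 T \<times> simplex2 T) w * ntensor_inner n (increment f (fst w)) (increment f (snd w))))" for w
  have V_eq: "V w = indicator (simplex2 T \<times> simplex2 T) w * (\<Sum>n<J. (1 + real n) * fact n * (donsker_coef n)\<^sup>2
    * ntensor_inner n (increment f (fst w)) (increment f (snd w)))" for w
    by (simp add: V_def sum_distrib_left mult_ac)
  define c where "c = ennreal ((M\<^sup>2 + 1)\<^sup>2 / (2 * pi))"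
  have V_le: "AE w in lborel2 \<Otimes>\<^sub>M lborel2.
      ennreal (V w) \<le> c * (indicator (simplex2 T \<times> simplex2 T) w * gram_integrand f w)"
    unfolding V_eq c_def by (rule AE_sum_D12_norm_series_le_gram[OF norm_le])
  have "(\<Sum>n<J. (1 + real n powr 1) * fact n * knorm2 n (sil_kernel T f n)) = (\<integral>w. V w \<partial>(lborel2 \<Otimes>\<^sub>M lborel2))"
    unfolding V_def
    by (subst Bochner_Integration.integral_sum) (auto simp: sil_kernel_square(2,3) mult_ac)
  also have "\<dots> = enn2real (\<integral>\<^sup>+w. ennreal (V w) \<partial>(lborel2 \<Otimes>\<^sub>M lborel2))"
  proof (rule integral_eq_nn_integral)
    have "integrable (lborel2 \<Otimes>\<^sub>M lborel2) V"
      unfolding V_def by (intro Bochner_Integration.integrable_sum) (simp add: sil_kernel_square(2))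
    then show "V \<in> borel_measurable (lborel2 \<Otimes>\<^sub>M lborel2)"
      by (rule borel_measurable_integrable)
  qed (simp add: V_eq sum_D12_norm_series_nonneg)
  also have "\<dots> \<le> enn2real (c * (\<integral>\<^sup>+q. indicator (simplex2 T \<times> simplex2 T) q * gram_integrand f q \<partial>(lborel2 \<Otimes>\<^sub>M lborel2)))"
  proof (rule enn2real_mono)
    show "(\<integral>\<^sup>+w. ennreal (V w) \<partial>(lborel2 \<Otimes>\<^sub>M lborel2))
        \<le> c * (\<integral>\<^sup>+q. indicator (simplex2 T \<times> simplex2 T) q * gram_integrand f q \<partial>(lborel2 \<Otimes>\<^sub>M lborel2))"
      using nn_integral_mono_AE[OF V_le] by (simp add: nn_integral_cmult)
    show "c * (\<integral>\<^sup>+q. indicator (simplex2 T \<times> simplex2 T) q * gram_integrand f q \<partial>(lborel2 \<Otimes>\<^sub>M lborel2)) < \<top>"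
      using gram by (simp add: c_def ennreal_mult_less_top)
  qed
  finally show "(\<Sum>n<J. (1 + real n powr 1) * fact n * knorm2 n (sil_kernel T f n))
      \<le> enn2real (c * (\<integral>\<^sup>+q. indicator (simplex2 T \<times> simplex2 T) q * gram_integrand f q \<partial>(lborel2 \<Otimes>\<^sub>M lborel2)))" .
qed

context
  fixes \<xi> :: "real \<Rightarrow> complex"
  assumes borel_measurable_\<xi>[measurable]: "\<xi> \<in> borel_measurable lborel"
    and L2_norm_\<xi>: "L2 (\<lambda>y. norm (\<xi> y))"
begin

lemma borel_measurable_cpair_increment[measurable]:
  "(\<lambda>p. cpair \<xi> (increment f p)) \<in> borel_measurable lborel2"
proof -
  have "(\<lambda>z. \<xi> (snd z) * of_real (increment f (fst z) (snd z))) \<in> borel_measurable (lborel2 \<Otimes>\<^sub>M lborel)"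
    by measurable
  then show ?thesis
    unfolding cpair_def by (intro lborel.borel_measurable_lebesgue_integral) (simp add: case_prod_beta')
qed

lemma integrable_incr_tensor_test:
  "integrable (Rn n \<Otimes>\<^sub>M lborel2) (\<lambda>(x, p). of_real (incr_tensor n p x) * (\<Prod>i<n. \<xi> (x i)))"
proof (rule integrableI_bounded)
  interpret pair_sigma_finite "Rn n" lborel2
    by (intro pair_sigma_finite.intro sigma_finite_Rn sigma_finite_lborel2)
  have [measurable]: "(\<lambda>x. \<xi> (x i)) \<in> borel_measurable (Rn n)" if "i \<in> {..<n}" for i
    using measurable_compose[OF measurable_Rn_coordinate[OF that], of \<xi> borel] by simp
  show meas: "(\<lambda>(x, p). of_real (incr_tensor n p x) * (\<Prod>i<n. \<xi> (x i))) \<in> borel_measurable (Rn n \<Otimes>\<^sub>M lborel2)"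
    by measurable
  have "(\<integral>\<^sup>+z. ennreal (norm ((\<lambda>(x, p). of_real (incr_tensor n p x) * (\<Prod>i<n. \<xi> (x i))) z)) \<partial>(Rn n \<Otimes>\<^sub>M lborel2))
      = (\<integral>\<^sup>+p. (\<integral>\<^sup>+x. ennreal (norm (of_real (incr_tensor n p x) * (\<Prod>i<n. \<xi> (x i)))) \<partial>Rn n) \<partial>lborel2)"
    by (subst nn_integral_snd[symmetric]) (use meas in \<open>auto simp: case_prod_beta'\<close>)
  also have "\<dots> \<le> (\<integral>\<^sup>+p. ennreal (l2norm (\<lambda>y. norm (\<xi> y)) ^ n
      * (indicator (simplex2 T) p * inverse (l2norm (increment f p)))) \<partial>lborel2)"
  proof (intro nn_integral_mono)
    fix p :: "real \<times> real"
    show "(\<integral>\<^sup>+x. ennreal (norm (of_real (incr_tensor n p x) * (\<Prod>i<n. \<xi> (x i)))) \<partial>Rn n)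
        \<le> ennreal (l2norm (\<lambda>y. norm (\<xi> y)) ^ n * (indicator (simplex2 T) p * inverse (l2norm (increment f p))))"
    proof (cases "p \<in> simplex2 T")
      case True
      then show ?thesis
        using nn_integral_ntensor_test_le[OF L2_increment_f L2_norm_\<xi>] by simp
    qed simp
  qed
  also have "\<dots> < \<infinity>"
  proof -
    have "(\<integral>\<^sup>+p. ennreal (norm (l2norm (\<lambda>y. norm (\<xi> y)) ^ n
        * (indicator (simplex2 T) p * inverse (l2norm (increment f p))))) \<partial>lborel2) < \<infinity>"
      using integrable_mult_right[OF integrable_inverse_norm, of "l2norm (\<lambda>y. norm (\<xi> y)) ^ n"]
      by (simp only: integrable_iff_bounded)
    moreover have eq: "norm (l2norm (\<lambda>y. norm (\<xi> y)) ^ n * (indicator (simplex2 T) p * inverse (l2norm (increment f p))))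
        = l2norm (\<lambda>y. norm (\<xi> y)) ^ n * (indicator (simplex2 T) p * inverse (l2norm (increment f p)))" for p
      by (simp add: l2norm_nonneg)
    ultimately show ?thesis
      by (simp only: eq)
  qed
  finally show "(\<integral>\<^sup>+z. ennreal (norm ((\<lambda>(x, p). of_real (incr_tensor n p x) * (\<Prod>i<n. \<xi> (x i))) z))
      \<partial>(Rn n \<Otimes>\<^sub>M lborel2)) < \<infinity>" .
qed

lemma tensor_pair_sil_kernel:
  "tensor_pair n (sil_kernel T f n) \<xi> = (\<integral>p. sil_chaos_term T f \<xi> n p \<partial>lborel2)"
proof -
  interpret pair_sigma_finite "Rn n" lborel2
    by (intro pair_sigma_finite.intro sigma_finite_Rn sigma_finite_lborel2)
  have pointwise: "of_real (sil_kernel T f n x) * (\<Prod>i<n. \<xi> (x i))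
      = of_real (donsker_coef n) * (\<integral>p. of_real (incr_tensor n p x) * (\<Prod>i<n. \<xi> (x i)) \<partial>lborel2)" for x
  proof -
    have "of_real (sil_kernel T f n x) * (\<Prod>i<n. \<xi> (x i))
        = of_real (donsker_coef n) * (of_real (\<integral>p. incr_tensor n p x \<partial>lborel2) * (\<Prod>i<n. \<xi> (x i)))"
      by (simp only: sil_kernel_def of_real_mult mult.assoc)
    also have "(of_real (\<integral>p. incr_tensor n p x \<partial>lborel2) :: complex) = (\<integral>p. of_real (incr_tensor n p x) \<partial>lborel2)"
      by (rule integral_complex_of_real[symmetric])
    also have "(\<integral>p. of_real (incr_tensor n p x) \<partial>lborel2) * (\<Prod>i<n. \<xi> (x i))
        = (\<integral>p. of_real (incr_tensor n p x) * (\<Prod>i<n. \<xi> (x i)) \<partial>lborel2)"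
      by (rule integral_mult_left_zero[symmetric])
    finally show ?thesis .
  qed
  have "tensor_pair n (sil_kernel T f n) \<xi>
      = of_real (donsker_coef n) * (\<integral>x. \<integral>p. of_real (incr_tensor n p x) * (\<Prod>i<n. \<xi> (x i)) \<partial>lborel2 \<partial>Rn n)"
    unfolding tensor_pair_def pointwise by (rule integral_mult_right_zero)
  also have "(\<integral>x. \<integral>p. of_real (incr_tensor n p x) * (\<Prod>i<n. \<xi> (x i)) \<partial>lborel2 \<partial>Rn n)
      = (\<integral>p. \<integral>x. of_real (incr_tensor n p x) * (\<Prod>i<n. \<xi> (x i)) \<partial>Rn n \<partial>lborel2)"
    by (rule Fubini_integral[OF integrable_incr_tensor_test, symmetric])
  also have "of_real (donsker_coef n) * \<dots> = (\<integral>p. sil_chaos_term T f \<xi> n p \<partial>lborel2)"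
  proof -
    have inner: "(\<integral>x. of_real (incr_tensor n p x) * (\<Prod>i<n. \<xi> (x i)) \<partial>Rn n)
        = of_real (indicator (simplex2 T) p * inverse (l2norm (increment f p)) ^ Suc n) * cpair \<xi> (increment f p) ^ n" for p
      using integral_ntensor_test[OF L2_increment_f borel_measurable_\<xi> L2_norm_\<xi>, of p n]
      by (cases "p \<in> simplex2 T") (simp_all add: mult.assoc)
    show ?thesis
      unfolding inner unfolding sil_chaos_term_def integral_mult_right_zero[symmetric] of_real_mult
      by (simp only: mult_ac)
  qed
  finally show ?thesis .
qed

lemma norm_sil_chaos_term_le:
  "norm (sil_chaos_term T f \<xi> n p)
    \<le> \<bar>donsker_coef n\<bar> * l2norm (\<lambda>y. norm (\<xi> y)) ^ n * (indicator (simplex2 T) p * inverse (l2norm (increment f p)))"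
proof (cases "p \<in> simplex2 T")
  case True
  have "norm (sil_chaos_term T f \<xi> n p)
      = \<bar>donsker_coef n\<bar> * (inverse (l2norm (increment f p)) ^ Suc n * norm (cpair \<xi> (increment f p)) ^ n)"
    using True unfolding sil_chaos_term_def norm_mult norm_of_real norm_power
    by (simp add: abs_mult l2norm_nonneg)
  also have "\<dots> \<le> \<bar>donsker_coef n\<bar> * (inverse (l2norm (increment f p)) ^ Suc n
      * (l2norm (increment f p) * l2norm (\<lambda>y. norm (\<xi> y))) ^ n)"
    using norm_cpair_le[OF L2_increment_f[OF True] L2_norm_\<xi>]
    by (intro mult_left_mono power_mono) (simp_all add: l2norm_nonneg)
  also have "\<dots> = \<bar>donsker_coef n\<bar> * l2norm (\<lambda>y. norm (\<xi> y)) ^ n * inverse (l2norm (increment f p))"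
    by (subst inverse_power_Suc_mult_power) (simp_all add: l2norm_nonneg mult_ac)
  finally show ?thesis
    using True by simp
qed (simp add: sil_chaos_term_def)

lemma integrable_sil_chaos_term: "integrable lborel2 (sil_chaos_term T f \<xi> n)"
proof (rule Bochner_Integration.integrable_bound)
  show "integrable lborel2 (\<lambda>p. \<bar>donsker_coef n\<bar> * l2norm (\<lambda>y. norm (\<xi> y)) ^ n
      * (indicator (simplex2 T) p * inverse (l2norm (increment f p))))"
    by (intro integrable_mult_right integrable_inverse_norm)
  show "sil_chaos_term T f \<xi> n \<in> borel_measurable lborel2"
    unfolding sil_chaos_term_def by measurable
qed (use norm_sil_chaos_term_le in \<open>simp add: l2norm_nonneg\<close>)

lemma summable_norm_sil_chaos_term: "summable (\<lambda>n. norm (sil_chaos_term T f \<xi> n p))"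
proof (rule summable_comparison_test'[where N = 0])
  show "summable (\<lambda>n. \<bar>donsker_coef n\<bar> * l2norm (\<lambda>y. norm (\<xi> y)) ^ n
      * (indicator (simplex2 T) p * inverse (l2norm (increment f p))))"
    by (intro summable_mult2 summable_abs_donsker_coef)
qed (simp add: norm_sil_chaos_term_le)

lemma summable_integral_norm_sil_chaos_term:
  "summable (\<lambda>n. \<integral>p. norm (sil_chaos_term T f \<xi> n p) \<partial>lborel2)"
proof (rule summable_comparison_test'[where N = 0])
  define I where "I = (\<integral>p. indicator (simplex2 T) p * inverse (l2norm (increment f p)) \<partial>lborel2)"
  show "summable (\<lambda>n. \<bar>donsker_coef n\<bar> * l2norm (\<lambda>y. norm (\<xi> y)) ^ n * I)"
    by (intro summable_mult2 summable_abs_donsker_coef)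
  show "norm (\<integral>p. norm (sil_chaos_term T f \<xi> n p) \<partial>lborel2)
      \<le> \<bar>donsker_coef n\<bar> * l2norm (\<lambda>y. norm (\<xi> y)) ^ n * I" for n
  proof -
    have "(\<integral>p. norm (sil_chaos_term T f \<xi> n p) \<partial>lborel2) \<le> (\<integral>p. \<bar>donsker_coef n\<bar> * l2norm (\<lambda>y. norm (\<xi> y)) ^ n
        * (indicator (simplex2 T) p * inverse (l2norm (increment f p))) \<partial>lborel2)"
      by (intro integral_mono integrable_norm integrable_sil_chaos_term integrable_mult_right
          integrable_inverse_norm norm_sil_chaos_term_le)
    then show ?thesis
      by (simp add: I_def)
  qed
qed

lemma sil_integrand_chaos_expansion:
  shows "set_integrable lborel2 (simplex2 T) (sil_integrand f \<xi>)"
    and "(\<lambda>n. tensor_pair n (sil_kernel T f n) \<xi>) sums S_SIL T f \<xi>"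
proof -
  note dominated = integrable_sil_chaos_term AE_I2[OF summable_norm_sil_chaos_term]
    summable_integral_norm_sil_chaos_term
  have sum_eq: "(\<lambda>p. \<Sum>n. sil_chaos_term T f \<xi> n p) = (\<lambda>p. indicator (simplex2 T) p *\<^sub>R sil_integrand f \<xi> p)"
    using sil_chaos_term_sums by (simp add: sums_iff)
  show "set_integrable lborel2 (simplex2 T) (sil_integrand f \<xi>)"
    using integrable_suminf[OF dominated] by (simp add: set_integrable_def sum_eq)
  show "(\<lambda>n. tensor_pair n (sil_kernel T f n) \<xi>) sums S_SIL T f \<xi>"
    using sums_integral[OF dominated] by (simp add: tensor_pair_sil_kernel S_SIL_def set_lebesgue_integral_def sum_eq)
qed

end

end

theorem theorem3p6:
  fixes T M :: real and f :: "real \<Rightarrow> real \<Rightarrow> real"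
  assumes "T > 0"
    and "(\<lambda>(t, x). f t x) \<in> borel_measurable (lborel \<Otimes>\<^sub>M lborel)"
    and "\<forall>t\<in>{0..T}. L2 (f t)"
    and "AE p in lborel \<Otimes>\<^sub>M lborel. p \<in> {0..T} \<times> {0..T} \<longrightarrow>
           0 < l2norm (fdiff f (fst p) (snd p)) \<and> l2norm (fdiff f (fst p) (snd p)) \<le> M"
    and "(\<integral>\<^sup>+ q. indicator (simplex2 T \<times> simplex2 T) q * gram_integrand f q
           \<partial>((lborel \<Otimes>\<^sub>M lborel) \<Otimes>\<^sub>M (lborel \<Otimes>\<^sub>M lborel))) < \<infinity>"
  shows "(\<forall>\<xi>. schwartzC \<xi> \<longrightarrow>
            set_integrable (lborel \<Otimes>\<^sub>M lborel) (simplex2 T) (sil_integrand f \<xi>))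
         \<and> in_D 1 (S_SIL T f)"
proof -
  interpret sil_setting T f
    using assms(2,3) integrable_inverse_l2norm_increment[OF assms(2,5)] by unfold_locales
  have norm_le: "AE p in lborel2. p \<in> {0..T} \<times> {0..T} \<longrightarrow> l2norm (increment f p) \<le> M"
    using assms(4) by (rule eventually_mono) (auto simp: increment_def)
  note expansion = sil_integrand_chaos_expansion[OF schwartzC_borel_measurable schwartzC_L2_norm]
  show ?thesis
    unfolding in_D_def
  proof (intro conjI allI impI exI)
    show "set_integrable lborel2 (simplex2 T) (sil_integrand f \<xi>)" if "schwartzC \<xi>" for \<xi>
      using expansion(1)[OF that that] .
    show "sym_L2_kernel n (sil_kernel T f n)" for n
      by (rule sym_L2_kernel_sil_kernel)
    show "summable (\<lambda>n. (1 + real n powr 1) * fact n * knorm2 n (sil_kernel T f n))"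
      by (rule summable_D12_norm_sil_kernel[OF norm_le assms(5)])
    show "(\<lambda>n. tensor_pair n (sil_kernel T f n) \<xi>) sums S_SIL T f \<xi>" if "schwartzC \<xi>" for \<xi>
      using expansion(2)[OF that that] .
  qed
qed

end
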